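(* Let $H$, $d$, $(X,\mu)$, $\mathcal{A}$, $(N_s)$, $\delta_r,s_r,\sigma_s$ be as in the context and fix an integer $r\ge3$. Fix $0\le\alpha<\beta$ and an integer $s>s_r+r$. Then for any partition $\mathcal{Q}$ of $[r]$, any $\underline h\in\Delta_{\mathcal{Q}}(\alpha,\beta)$, any $f\in\mathcal{A}$ and any $\mathcal{P}\in\mathfrak{P}_{[r]}$, $$|\widetilde\psi_{f,\underline h}(\mathcal{P})-\widetilde\psi^{\mathcal{Q}}_{f,\underline h}(\mathcal{P})|\le C_{r,s}\,e^{-(\beta\delta_r-r\alpha\sigma_s)}N_s(f)^r,$$ where $C_{r,s}$ depends only on $r$ and $s$.
   Context: $H$ is a locally compact second countable group with left-invariant metric $d$, acting measure-preservingly on a probability space $(X,\mu)$; $h\cdot f=f\circ h^{-1}$. $\mathcal{A}\subset L^\infty(X,\mu)$ is an $H$-invariant subalgebra and $(N_s)_{s\ge1}$ seminorms on it with (constants depending only on $s$): $N_s(f)\ll N_{s+1}(f)$; $\|f\|_{L^\infty}\ll N_s(f)$; $N_s(h\cdot f)\ll e^{\sigma_s d(h,e)}N_s(f)$ for some $\sigma_s>0$; $N_s(f_1f_2)\ll N_{s+1}(f_1)N_{s+1}(f_2)$. Exponential mixing of all orders: for every $k\ge2$ there are $\delta_k>0$ and an integer $s_k>0$ with $\big|\mu(\prod_{i=1}^k h_i\cdot f_i)-\prod_i\mu(f_i)\big|\ll_{k,s}e^{-\delta_k\min_{i\ne j}d(h_i,h_j)}\prod_iN_s(f_i)$ for all $s>s_k$,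 $f_i\in\mathcal{A}$, $h_i\in H$; $(\sigma_s)$, $(s_k)$ increasing, $(\delta_k)$ decreasing, $\delta_k<k\sigma_s$. Distances: $d^I(\underline h)=\max_{i,j\in I}d(h_i,h_j)$, $d_{I,J}(\underline h)=\min_{i\in I,j\in J}d(h_i,h_j)$, $d^{\mathcal{Q}}=\max_{I\in\mathcal{Q}}d^I$, $d_{\mathcal{Q}}=\min\{d_{I,J}:I\ne J\in\mathcal{Q}\}$, $\Delta_{\mathcal{Q}}(\alpha,\beta)=\{\underline h\in H^r:d^{\mathcal{Q}}(\underline h)\le\alpha,\ d_{\mathcal{Q}}(\underline h)>\beta\}$. $\mathfrak{P}_{[r]}$ is the set of cyclically ordered partitions of $[r]$ (partitions into non-empty blocks with a cyclic order on blocks). For $f\in\mathcal{A}$, $\underline h\in H^r$: $\psi_{f,\underline h}(I)=\mu(\prod_{i\in I}h_i\cdot f)$ for $I\ne\emptyset$, $\psi_{f,\underline h}(\emptyset)=1$; $\psi^{\mathcal{Q}}(I)=\prod_{J\in\mathcal{Q}}\psi(I\cap J)$; $\widetilde\psi(\mathcal{P})=\prod_{I\in\mathcal{P}}\psi(I)$, $\widetilde\psi^{\mathcal{Q}}(\mathcal{P})=\prod_{I\in\mathcal{P}}\psi^{\mathcal{Q}}(I)$. *)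

theory Defs
  imports "HOL-Probability.Probability"
begin

text \<open>H is a locally compact second countable (topological) group, written additively
(group_add is not assumed commutative), whose topology is induced by the metric
dist, which is left-invariant. The identity e is 0.\<close>

definition lcsc_left_inv_metric_group :: "'h::{group_add,metric_space} itself \<Rightarrow> bool" where
  "lcsc_left_inv_metric_group _ \<longleftrightarrow>
     locally compact (UNIV :: 'h set) \<and>
     (\<exists>\<B>::'h set set. countable \<B> \<and> topological_basis \<B>) \<and>
     continuous_on UNIV (\<lambda>p::'h \<times> 'h. fst p + snd p) \<and>
     continuous_on UNIV (\<lambda>x::'h. - x) \<and>
     (\<forall>g x y::'h. dist (g + x) (g + y) = dist x y)"

definition mp_action :: "'x measure \<Rightarrow> ('h::group_add \<Rightarrow> 'x \<Rightarrow> 'x) \<Rightarrow> bool" where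
  "mp_action M act \<longleftrightarrow>
     (\<forall>g. act g \<in> M \<rightarrow>\<^sub>M M \<and> distr M M (act g) = M) \<and>
     (\<forall>x\<in>space M. act 0 x = x) \<and>
     (\<forall>g g'. \<forall>x\<in>space M. act (g + g') x = act g (act g' x))"

definition hdot :: "('h::group_add \<Rightarrow> 'x \<Rightarrow> 'x) \<Rightarrow> 'h \<Rightarrow> ('x \<Rightarrow> real) \<Rightarrow> 'x \<Rightarrow> real" where
  "hdot act g f = (\<lambda>x. f (act (- g) x))"

definition invariant_subalgebra ::
  "'x measure \<Rightarrow> ('h::group_add \<Rightarrow> 'x \<Rightarrow> 'x) \<Rightarrow> ('x \<Rightarrow> real) set \<Rightarrow> bool" where
  "invariant_subalgebra M act A \<longleftrightarrow>
     (\<forall>f\<in>A. f \<in> borel_measurable M \<and> (\<exists>B. AE x in M. \<bar>f x\<bar> \<le> B)) \<and>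
     (\<forall>f\<in>A. \<forall>g\<in>A. (\<lambda>x. f x + g x) \<in> A \<and> (\<lambda>x. f x * g x) \<in> A) \<and>
     (\<forall>f\<in>A. \<forall>c::real. (\<lambda>x. c * f x) \<in> A) \<and>
     (\<forall>f\<in>A. \<forall>h. hdot act h f \<in> A)"

text \<open>Each N_s (s \<ge> 1) is a seminorm on A, with the standing properties; every
\<open>\<ll>\<close> is an inequality up to a constant depending only on s.\<close>
definition seminorm_family ::
  "'x measure \<Rightarrow> ('h::{group_add,metric_space} \<Rightarrow> 'x \<Rightarrow> 'x) \<Rightarrow> ('x \<Rightarrow> real) set
     \<Rightarrow> (nat \<Rightarrow> ('x \<Rightarrow> real) \<Rightarrow> real) \<Rightarrow> (nat \<Rightarrow> real) \<Rightarrow> bool" where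
  "seminorm_family M act A N \<sigma> \<longleftrightarrow>
     (\<forall>s\<ge>1. \<forall>f\<in>A. \<forall>g\<in>A. \<forall>c::real.
        N s f \<ge> 0 \<and> N s (\<lambda>x. c * f x) = \<bar>c\<bar> * N s f \<and>
        N s (\<lambda>x. f x + g x) \<le> N s f + N s g) \<and>
     (\<forall>s\<ge>1. \<exists>C. \<forall>f\<in>A. N s f \<le> C * N (s + 1) f) \<and>
     (\<forall>s\<ge>1. \<exists>C. \<forall>f\<in>A. AE x in M. \<bar>f x\<bar> \<le> C * N s f) \<and>
     (\<forall>s\<ge>1. \<sigma> s > 0) \<and>
     (\<forall>s\<ge>1. \<exists>C. \<forall>f\<in>A. \<forall>h. N s (hdot act h f) \<le> C * exp (\<sigma> s * dist h 0) * N s f) \<and>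
     (\<forall>s\<ge>1. \<exists>C. \<forall>f1\<in>A. \<forall>f2\<in>A.
        N s (\<lambda>x. f1 x * f2 x) \<le> C * N (s + 1) f1 * N (s + 1) f2)"

definition exp_mixing_all_orders ::
  "'x measure \<Rightarrow> ('h::{group_add,metric_space} \<Rightarrow> 'x \<Rightarrow> 'x) \<Rightarrow> ('x \<Rightarrow> real) set
     \<Rightarrow> (nat \<Rightarrow> ('x \<Rightarrow> real) \<Rightarrow> real) \<Rightarrow> (nat \<Rightarrow> real) \<Rightarrow> (nat \<Rightarrow> nat) \<Rightarrow> bool" where
  "exp_mixing_all_orders M act A N \<delta> sk \<longleftrightarrow>
     (\<forall>k\<ge>2. \<delta> k > 0 \<and> sk k > 0 \<and>
        (\<forall>s>sk k. \<exists>C. \<forall>fs hs.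
           (\<forall>i\<in>{1..k}. fs i \<in> A) \<longrightarrow>
           \<bar>integral\<^sup>L M (\<lambda>x. \<Prod>i\<in>{1..k}. hdot act (hs i) (fs i) x)
              - (\<Prod>i\<in>{1..k}. integral\<^sup>L M (fs i))\<bar>
           \<le> C * exp (- \<delta> k * Min {dist (hs i) (hs j) | i j. i \<in> {1..k} \<and> j \<in> {1..k} \<and> i \<noteq> j})
               * (\<Prod>i\<in>{1..k}. N s (fs i))))"

definition parameter_conventions :: "(nat \<Rightarrow> real) \<Rightarrow> (nat \<Rightarrow> nat) \<Rightarrow> (nat \<Rightarrow> real) \<Rightarrow> bool" where
  "parameter_conventions \<sigma> sk \<delta> \<longleftrightarrow>
     (\<forall>s t. 1 \<le> s \<longrightarrow> s \<le> t \<longrightarrow> \<sigma> s \<le> \<sigma> t) \<and>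
     (\<forall>k l. 2 \<le> k \<longrightarrow> k \<le> l \<longrightarrow> sk k \<le> sk l) \<and>
     (\<forall>k l. 2 \<le> k \<longrightarrow> k \<le> l \<longrightarrow> \<delta> l \<le> \<delta> k) \<and>
     (\<forall>k s. 2 \<le> k \<longrightarrow> 1 \<le> s \<longrightarrow> \<delta> k < real k * \<sigma> s)"

text \<open>d^Q(h) = max over blocks I of the diameter of {h_i : i \<in> I};
 d_Q(h) = min over distinct blocks of the distance between them (= +\<infinity> if Q has one block).\<close>
definition d_up :: "nat set set \<Rightarrow> (nat \<Rightarrow> 'h::metric_space) \<Rightarrow> ereal" where
  "d_up Q h = Sup {ereal (dist (h i) (h j)) | I i j. I \<in> Q \<and> i \<in> I \<and> j \<in> I}"

definition d_low :: "nat set set \<Rightarrow> (nat \<Rightarrow> 'h::metric_space) \<Rightarrow> ereal" where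
  "d_low Q h = Inf {ereal (dist (h i) (h j)) | I J i j. I \<in> Q \<and> J \<in> Q \<and> I \<noteq> J \<and> i \<in> I \<and> j \<in> J}"

definition Delta :: "nat set set \<Rightarrow> real \<Rightarrow> real \<Rightarrow> (nat \<Rightarrow> 'h::metric_space) set" where
  "Delta Q \<alpha> \<beta> = {h. d_up Q h \<le> ereal \<alpha> \<and> d_low Q h > ereal \<beta>}"

text \<open>Cyclically ordered partitions of [r] = {1..r}: a cyclic order on the blocks is
represented by any of its linearisations, i.e. a list of distinct blocks.\<close>
definition cyc_partitions :: "nat \<Rightarrow> nat set list set" where
  "cyc_partitions r = {Ps. distinct Ps \<and> partition_on {1..r} (set Ps)}"

definition psi :: "'x measure \<Rightarrow> ('h::group_add \<Rightarrow> 'x \<Rightarrow> 'x) \<Rightarrow> ('x \<Rightarrow> real)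
    \<Rightarrow> (nat \<Rightarrow> 'h) \<Rightarrow> nat set \<Rightarrow> real" where
  "psi M act f h I = (if I = {} then 1 else integral\<^sup>L M (\<lambda>x. \<Prod>i\<in>I. hdot act (h i) f x))"

definition psiQ :: "'x measure \<Rightarrow> ('h::group_add \<Rightarrow> 'x \<Rightarrow> 'x) \<Rightarrow> ('x \<Rightarrow> real)
    \<Rightarrow> (nat \<Rightarrow> 'h) \<Rightarrow> nat set set \<Rightarrow> nat set \<Rightarrow> real" where
  "psiQ M act f h Q I = (\<Prod>J\<in>Q. psi M act f h (I \<inter> J))"

definition psi_tilde :: "'x measure \<Rightarrow> ('h::group_add \<Rightarrow> 'x \<Rightarrow> 'x) \<Rightarrow> ('x \<Rightarrow> real)
    \<Rightarrow> (nat \<Rightarrow> 'h) \<Rightarrow> nat set list \<Rightarrow> real" where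
  "psi_tilde M act f h P = (\<Prod>I\<in>set P. psi M act f h I)"

definition psiQ_tilde :: "'x measure \<Rightarrow> ('h::group_add \<Rightarrow> 'x \<Rightarrow> 'x) \<Rightarrow> ('x \<Rightarrow> real)
    \<Rightarrow> (nat \<Rightarrow> 'h) \<Rightarrow> nat set set \<Rightarrow> nat set list \<Rightarrow> real" where
  "psiQ_tilde M act f h Q P = (\<Prod>I\<in>set P. psiQ M act f h Q I)"

end

(* Fix a block I of P. The blocks of Q cut I into clusters I \<inter> J: translates h i with i in one
   cluster are alpha-close, translates in different clusters are more than beta apart. Choosing a
   representative c of each cluster K, the product of the h i . f over K is h c applied to a product
   of translates by - h c + h i, which are alpha-small by left invariance. So psi(I) is a correlation
   of order k = #clusters <= r at beta-separated points, and psi^Q(I) is the product of the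
   corresponding integrals. Mixing of order k bounds the difference by e^(-delta_r beta) times the
   product of the seminorms of the recentred cluster products, and the product and translation rules
   for the seminorms bound these by e^(sigma_s alpha |K|) N_s(f)^|K|, at the cost of |K| <= r extra
   indices (hence s > s_r + r). Since psi(I) and psi^Q(I) are bounded by (C N_s(f))^|I|, a telescoping
   product over the blocks of P gives the estimate. *)

theory Submission
  imports Defs
begin

lemma ex_constant_ge:
  fixes B :: "real \<Rightarrow> bool"
  assumes "B C" and "\<And>C C'. B C \<Longrightarrow> C \<le> C' \<Longrightarrow> B C'"
  shows "\<exists>C\<ge>c. B C"
  using assms by (intro exI[of _ "max C c"]) auto

lemma ex_uniform_constant:
  fixes B :: "'k \<Rightarrow> real \<Rightarrow> bool"
  assumes "finite I" and "\<And>k. k \<in> I \<Longrightarrow> \<exists>C. B k C"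
    and "\<And>k C C'. k \<in> I \<Longrightarrow> B k C \<Longrightarrow> C \<le> C' \<Longrightarrow> B k C'"
  shows "\<exists>C\<ge>0. \<forall>k\<in>I. B k C"
proof -
  obtain c where c: "\<And>k. k \<in> I \<Longrightarrow> B k (c k)"
    using assms(2) by metis
  have "c k \<le> Max (insert 0 (c ` I))" if "k \<in> I" for k
    using assms(1) that by (intro Max_ge) auto
  moreover have "0 \<le> Max (insert 0 (c ` I))"
    using assms(1) by (intro Max_ge) auto
  ultimately show ?thesis
    using c assms(3) by blast
qed

lemma power_le_max_one_power:
  fixes C :: real
  assumes "0 \<le> C" "k \<le> r"
  shows "C ^ k \<le> max 1 C ^ r"
proof -
  have "C ^ k \<le> max 1 C ^ k"
    using assms(1) by (intro power_mono) auto
  also have "\<dots> \<le> max 1 C ^ r"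
    using assms(2) by (intro power_increasing) auto
  finally show ?thesis .
qed

lemma abs_prod_diff_le:
  fixes a b K :: "'i \<Rightarrow> real" and \<epsilon> :: real
  assumes "finite B"
    and "\<And>I. I \<in> B \<Longrightarrow> \<bar>a I\<bar> \<le> K I \<and> \<bar>b I\<bar> \<le> K I \<and> \<bar>a I - b I\<bar> \<le> \<epsilon> * K I"
  shows "\<bar>(\<Prod>I\<in>B. a I) - (\<Prod>I\<in>B. b I)\<bar> \<le> real (card B) * \<epsilon> * (\<Prod>I\<in>B. K I)"
  using assms
proof (induction B rule: finite_induct)
  case empty
  then show ?case by simp
next
  case (insert x F)
  have IH: "\<bar>(\<Prod>I\<in>F. a I) - (\<Prod>I\<in>F. b I)\<bar> \<le> real (card F) * \<epsilon> * (\<Prod>I\<in>F. K I)"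
    using insert by auto
  have x: "\<bar>a x\<bar> \<le> K x" "\<bar>a x - b x\<bar> \<le> \<epsilon> * K x"
    using insert by auto
  have prod_b: "\<bar>\<Prod>I\<in>F. b I\<bar> \<le> (\<Prod>I\<in>F. K I)"
    unfolding abs_prod by (rule prod_mono) (use insert in auto)
  have "(\<Prod>I\<in>insert x F. a I) - (\<Prod>I\<in>insert x F. b I)
      = a x * ((\<Prod>I\<in>F. a I) - (\<Prod>I\<in>F. b I)) + (a x - b x) * (\<Prod>I\<in>F. b I)"
    using insert by (simp add: algebra_simps)
  then have "\<bar>(\<Prod>I\<in>insert x F. a I) - (\<Prod>I\<in>insert x F. b I)\<bar>
      \<le> \<bar>a x\<bar> * \<bar>(\<Prod>I\<in>F. a I) - (\<Prod>I\<in>F. b I)\<bar> + \<bar>a x - b x\<bar> * \<bar>\<Prod>I\<in>F. b I\<bar>"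
    by (metis abs_mult abs_triangle_ineq)
  also have "\<dots> \<le> K x * (real (card F) * \<epsilon> * (\<Prod>I\<in>F. K I)) + \<epsilon> * K x * (\<Prod>I\<in>F. K I)"
    using IH x prod_b by (intro add_mono mult_mono) auto
  also have "\<dots> = real (card (insert x F)) * \<epsilon> * (\<Prod>I\<in>insert x F. K I)"
    using insert by (simp add: algebra_simps)
  finally show ?case .
qed

lemma Min_dist_ge:
  fixes g :: "nat \<Rightarrow> 'a::metric_space"
  assumes "2 \<le> k" "\<forall>i\<in>{1..k}. \<forall>j\<in>{1..k}. i \<noteq> j \<longrightarrow> \<beta> \<le> dist (g i) (g j)"
  shows "\<beta> \<le> Min {dist (g i) (g j) | i j. i \<in> {1..k} \<and> j \<in> {1..k} \<and> i \<noteq> j}"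
proof -
  let ?D = "{dist (g i) (g j) | i j. i \<in> {1..k} \<and> j \<in> {1..k} \<and> i \<noteq> j}"
  have "?D \<subseteq> (\<lambda>(i, j). dist (g i) (g j)) ` ({1..k} \<times> {1..k})"
    by auto
  then have "finite ?D"
    by (rule finite_subset) simp
  moreover have "?D \<noteq> {}"
  proof -
    have "dist (g 1) (g 2) \<in> ?D"
      using assms(1) by fastforce
    then show ?thesis
      by blast
  qed
  moreover have "\<forall>d\<in>?D. \<beta> \<le> d"
    using assms(2) by blast
  ultimately show ?thesis
    by simp
qed

lemma partition_on_block:
  assumes "partition_on A P" "K \<in> P"
  shows "K \<subseteq> A" "K \<noteq> {}"
  using assms partition_onD1 partition_onD3 by blast+

lemma card_partition_on_le:
  assumes "finite A" "partition_on A P"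
  shows "card P \<le> card A"
proof -
  have fin: "finite K" if "K \<in> P" for K
    using partition_on_block[OF assms(2) that] assms(1) finite_subset by blast
  have "card P = (\<Sum>K\<in>P. 1)"
    by simp
  also have "\<dots> \<le> (\<Sum>K\<in>P. card K)"
    using fin partition_on_block(2)[OF assms(2)] by (intro sum_mono) (simp add: Suc_le_eq card_gt_0_iff)
  also have "\<dots> = card A"
    using product_partition[OF assms(2) fin] by simp
  finally show ?thesis .
qed

lemma prod_partition_on_trivial:
  assumes "partition_on I P" "finite P" "card P < 2" "g {} = 1"
  shows "(\<Prod>K\<in>P. g K) = g I"
proof (cases "P = {}")
  case True
  then show ?thesis
    using partition_onD1[OF assms(1)] assms(4) by simp
next
  case False
  then have "card P = 1"
    using assms(2,3) card_gt_0_iff[of P] by linarith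
  then obtain K where "P = {K}"
    by (rule card_1_singletonE)
  then show ?thesis
    using partition_onD1[OF assms(1)] by simp
qed

lemma abs_prod_partition_diff_le:
  fixes a b :: "'a set \<Rightarrow> real" and \<epsilon> B :: real
  assumes "finite X" "partition_on X \<P>" "0 \<le> \<epsilon>" "0 \<le> B"
    and "\<And>I. I \<in> \<P> \<Longrightarrow> \<bar>a I\<bar> \<le> B ^ card I \<and> \<bar>b I\<bar> \<le> B ^ card I \<and> \<bar>a I - b I\<bar> \<le> \<epsilon> * B ^ card I"
  shows "\<bar>(\<Prod>I\<in>\<P>. a I) - (\<Prod>I\<in>\<P>. b I)\<bar> \<le> card X * \<epsilon> * B ^ card X"
proof -
  have blocks: "finite I" if "I \<in> \<P>" for I
    using partition_on_block(1)[OF assms(2) that] assms(1) finite_subset by auto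
  have "\<bar>(\<Prod>I\<in>\<P>. a I) - (\<Prod>I\<in>\<P>. b I)\<bar> \<le> card \<P> * \<epsilon> * (\<Prod>I\<in>\<P>. B ^ card I)"
    using assms(1,2,5) finite_elements by (intro abs_prod_diff_le) auto
  also have "(\<Prod>I\<in>\<P>. B ^ card I) = B ^ card X"
    using product_partition[OF assms(2) blocks] by (simp add: power_sum)
  also have "card \<P> * \<epsilon> * B ^ card X \<le> card X * \<epsilon> * B ^ card X"
    using card_partition_on_le[OF assms(1,2)] assms(3,4) by (intro mult_right_mono) auto
  finally show ?thesis .
qed
section \<open>Clustered configurations\<close>

lemma dist_left_translate_zero:
  assumes "lcsc_left_inv_metric_group TYPE('h::{group_add,metric_space})"
  shows "dist (- a + b) (0::'h) = dist b a"
  using assms unfolding lcsc_left_inv_metric_group_def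
  by (metis add.left_inverse)

definition clustered :: "(nat \<Rightarrow> 'a::metric_space) \<Rightarrow> nat set set \<Rightarrow> real \<Rightarrow> real \<Rightarrow> bool" where
  "clustered h Q \<alpha> \<beta> \<longleftrightarrow>
     (\<forall>J\<in>Q. \<forall>i\<in>J. \<forall>j\<in>J. dist (h i) (h j) \<le> \<alpha>) \<and>
     (\<forall>J\<in>Q. \<forall>J'\<in>Q. J \<noteq> J' \<longrightarrow> (\<forall>i\<in>J. \<forall>j\<in>J'. \<beta> \<le> dist (h i) (h j)))"

lemma Delta_imp_clustered:
  assumes "h \<in> Delta Q \<alpha> \<beta>"
  shows "clustered h Q \<alpha> \<beta>"
  unfolding clustered_def
proof (intro conjI ballI impI)
  fix J i j assume "J \<in> Q" "i \<in> J" "j \<in> J"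
  then have "ereal (dist (h i) (h j)) \<le> d_up Q h"
    unfolding d_up_def by (intro Sup_upper) blast
  also have "\<dots> \<le> ereal \<alpha>"
    using assms by (simp add: Delta_def)
  finally show "dist (h i) (h j) \<le> \<alpha>"
    by simp
next
  fix J J' i j assume "J \<in> Q" "J' \<in> Q" "J \<noteq> J'" "i \<in> J" "j \<in> J'"
  have "ereal \<beta> < d_low Q h"
    using assms by (simp add: Delta_def)
  also have "\<dots> \<le> ereal (dist (h i) (h j))"
    unfolding d_low_def by (intro Inf_lower) (use \<open>J \<in> Q\<close> \<open>J' \<in> Q\<close> \<open>J \<noteq> J'\<close> \<open>i \<in> J\<close> \<open>j \<in> J'\<close> in blast)
  finally show "\<beta> \<le> dist (h i) (h j)"
    by simp
qed

lemma clustered_restrict: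
  assumes "clustered h Q \<alpha> \<beta>"
  shows "clustered h ((\<inter>) I ` Q - {{}}) \<alpha> \<beta>"
  using assms unfolding clustered_def by blast

lemma clustered_representatives:
  assumes "clustered h \<K> \<alpha> \<beta>" "\<forall>K\<in>\<K>. c K \<in> K"
  shows "\<forall>K\<in>\<K>. \<forall>K'\<in>\<K>. K \<noteq> K' \<longrightarrow> \<beta> \<le> dist (h (c K)) (h (c K'))"
    and "\<forall>K\<in>\<K>. \<forall>i\<in>K. dist (h i) (h (c K)) \<le> \<alpha>"
proof -
  have sep: "\<forall>J\<in>\<K>. \<forall>J'\<in>\<K>. J \<noteq> J' \<longrightarrow> (\<forall>i\<in>J. \<forall>j\<in>J'. \<beta> \<le> dist (h i) (h j))"
    and diam: "\<forall>J\<in>\<K>. \<forall>i\<in>J. \<forall>j\<in>J. dist (h i) (h j) \<le> \<alpha>"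
    using assms(1) unfolding clustered_def by simp_all
  show "\<forall>K\<in>\<K>. \<forall>K'\<in>\<K>. K \<noteq> K' \<longrightarrow> \<beta> \<le> dist (h (c K)) (h (c K'))"
  proof (intro ballI impI)
    fix K K' assume "K \<in> \<K>" "K' \<in> \<K>" "K \<noteq> K'"
    moreover from this have "c K \<in> K" "c K' \<in> K'"
      using assms(2) by simp_all
    ultimately show "\<beta> \<le> dist (h (c K)) (h (c K'))"
      using sep by simp
  qed
  show "\<forall>K\<in>\<K>. \<forall>i\<in>K. dist (h i) (h (c K)) \<le> \<alpha>"
  proof (intro ballI)
    fix K i assume "K \<in> \<K>" "i \<in> K"
    moreover from this have "c K \<in> K"
      using assms(2) by simp
    ultimately show "dist (h i) (h (c K)) \<le> \<alpha>"
      using diam by simp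
  qed
qed

lemma psiQ_eq_prod_restrict:
  assumes "partition_on X Q" "finite X" "I \<subseteq> X"
  shows "psiQ M act f h Q I = (\<Prod>K\<in>(\<inter>) I ` Q - {{}}. psi M act f h K)"
proof -
  let ?Q\<^sub>I = "{J\<in>Q. I \<inter> J \<noteq> {}}"
  have "finite Q"
    using assms finite_elements by blast
  then have "psiQ M act f h Q I = (\<Prod>J\<in>?Q\<^sub>I. psi M act f h (I \<inter> J))"
    unfolding psiQ_def by (intro prod.mono_neutral_right) (auto simp: psi_def)
  also have "\<dots> = (\<Prod>K\<in>(\<inter>) I ` ?Q\<^sub>I. psi M act f h K)"
  proof (rule prod.reindex[symmetric, unfolded comp_def])
    show "inj_on ((\<inter>) I) ?Q\<^sub>I"
      using partition_onD2[OF assms(1)] by (auto simp: inj_on_def disjoint_def)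
  qed
  also have "(\<inter>) I ` ?Q\<^sub>I = (\<inter>) I ` Q - {{}}"
    by auto
  finally show ?thesis .
qed

lemma psiQ_eq_psi_if_one_block:
  assumes "partition_on X Q" "finite X" "I \<subseteq> X" "card ((\<inter>) I ` Q - {{}}) < 2"
  shows "psiQ M act f h Q I = psi M act f h I"
proof -
  have "partition_on I ((\<inter>) I ` Q - {{}})"
    using partition_on_restrict[OF assms(1), of I] assms(3) by (simp add: Int_absorb2)
  moreover have "finite ((\<inter>) I ` Q - {{}})"
    using assms(1,2) finite_elements by blast
  ultimately show ?thesis
    unfolding psiQ_eq_prod_restrict[OF assms(1-3)]
    by (rule prod_partition_on_trivial[OF _ _ assms(4)]) (simp add: psi_def)
qed
section \<open>Translates, seminorms and mixing\<close>

locale exp_mixing_action =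
  fixes M :: "'x measure" and act :: "'h::{group_add,metric_space} \<Rightarrow> 'x \<Rightarrow> 'x"
    and A :: "('x \<Rightarrow> real) set" and N :: "nat \<Rightarrow> ('x \<Rightarrow> real) \<Rightarrow> real"
    and \<sigma> \<delta> :: "nat \<Rightarrow> real" and sk :: "nat \<Rightarrow> nat"
  assumes left_inv_group: "lcsc_left_inv_metric_group TYPE('h)"
    and prob: "prob_space M"
    and action: "mp_action M act"
    and algebra: "invariant_subalgebra M act A"
    and seminorms: "seminorm_family M act A N \<sigma>"
    and mixing: "exp_mixing_all_orders M act A N \<delta> sk"
    and conventions: "parameter_conventions \<sigma> sk \<delta>"
begin

lemma hdot_in_A: "f \<in> A \<Longrightarrow> hdot act g f \<in> A"
  using algebra by (simp add: invariant_subalgebra_def)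

lemma measurable_A: "f \<in> A \<Longrightarrow> f \<in> borel_measurable M"
  using algebra by (simp add: invariant_subalgebra_def)

lemma prod_in_A:
  assumes "finite S" "S \<noteq> {}" "\<And>i. i \<in> S \<Longrightarrow> u i \<in> A"
  shows "(\<lambda>x. \<Prod>i\<in>S. u i x) \<in> A"
  using assms
proof (induction S rule: finite_ne_induct)
  case (insert i S)
  then show ?case
    using algebra by (simp add: invariant_subalgebra_def)
qed simp

lemma hdot_hdot:
  assumes "x \<in> space M"
  shows "hdot act g (hdot act g' F) x = hdot act (g + g') F x"
proof -
  have "act (- g' + - g) x = act (- g') (act (- g) x)"
    using action assms unfolding mp_action_def by blast
  then show ?thesis
    by (simp add: hdot_def minus_add)
qed

lemma integral_hdot:
  assumes "F \<in> borel_measurable M"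
  shows "integral\<^sup>L M (hdot act g F) = integral\<^sup>L M F"
proof -
  have meas: "act (- g) \<in> M \<rightarrow>\<^sub>M M" and distr: "distr M M (act (- g)) = M"
    using action by (auto simp: mp_action_def)
  have "integral\<^sup>L M F = integral\<^sup>L (distr M M (act (- g))) F"
    unfolding distr ..
  also have "\<dots> = integral\<^sup>L M (hdot act g F)"
    unfolding hdot_def by (rule integral_distr[OF meas assms])
  finally show ?thesis ..
qed

lemma AE_hdot_abs_le:
  assumes "F \<in> borel_measurable M" "AE x in M. \<bar>F x\<bar> \<le> B"
  shows "AE x in M. \<bar>hdot act g F x\<bar> \<le> B"
proof -
  have meas: "act (- g) \<in> M \<rightarrow>\<^sub>M M" and distr: "distr M M (act (- g)) = M"
    using action by (auto simp: mp_action_def)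
  have "AE x in distr M M (act (- g)). \<bar>F x\<bar> \<le> B"
    unfolding distr by (rule assms(2))
  then show ?thesis
    using assms(1) by (subst (asm) AE_distr_iff[OF meas]) (auto simp: hdot_def)
qed

lemma N_nonneg: "1 \<le> s \<Longrightarrow> f \<in> A \<Longrightarrow> 0 \<le> N s f"
  using seminorms by (simp add: seminorm_family_def)

lemma \<sigma>_nonneg: "1 \<le> s \<Longrightarrow> 0 \<le> \<sigma> s"
  using seminorms by (simp add: seminorm_family_def less_imp_le)

lemma \<sigma>_mono: "1 \<le> s \<Longrightarrow> s \<le> t \<Longrightarrow> \<sigma> s \<le> \<sigma> t"
  using conventions by (simp add: parameter_conventions_def)

lemma N_Suc_le:
  assumes "1 \<le> s"
  shows "\<exists>C\<ge>0. \<forall>f\<in>A. N s f \<le> C * N (s + 1) f"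
proof -
  obtain C where "\<forall>f\<in>A. N s f \<le> C * N (s + 1) f"
    using seminorms assms unfolding seminorm_family_def by blast
  then show ?thesis
  proof (rule ex_constant_ge)
    fix C C' :: real assume "\<forall>f\<in>A. N s f \<le> C * N (s + 1) f" "C \<le> C'"
    then show "\<forall>f\<in>A. N s f \<le> C' * N (s + 1) f"
      using N_nonneg[of "s + 1"] by (meson le_add2 order_trans mult_right_mono)
  qed
qed

lemma N_index_mono:
  assumes "1 \<le> s" "s \<le> t"
  shows "\<exists>C\<ge>0. \<forall>f\<in>A. N s f \<le> C * N t f"
  using assms(2)
proof (induction t rule: dec_induct)
  case base
  show ?case by (intro exI[of _ 1]) simp
next
  case (step n)
  obtain C where C: "C \<ge> 0" "\<forall>f\<in>A. N s f \<le> C * N n f"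
    using step.IH by blast
  obtain C' where C': "C' \<ge> 0" "\<forall>f\<in>A. N n f \<le> C' * N (n + 1) f"
    using N_Suc_le[of n] assms(1) step.hyps(1) by auto
  have "N s f \<le> (C * C') * N (Suc n) f" if "f \<in> A" for f
  proof -
    have "N s f \<le> C * N n f" using C that by blast
    also have "\<dots> \<le> C * (C' * N (n + 1) f)" using C C' that by (intro mult_left_mono) auto
    finally show ?thesis by simp
  qed
  then show ?case using C C' by (intro exI[of _ "C * C'"]) auto
qed

lemma N_hdot_le:
  assumes "1 \<le> s"
  shows "\<exists>C\<ge>0. \<forall>f\<in>A. \<forall>g. N s (hdot act g f) \<le> C * exp (\<sigma> s * dist g 0) * N s f"
proof -
  obtain C where "\<forall>f\<in>A. \<forall>g. N s (hdot act g f) \<le> C * exp (\<sigma> s * dist g 0) * N s f"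
    using seminorms assms unfolding seminorm_family_def by blast
  then show ?thesis
  proof (rule ex_constant_ge)
    fix C C' :: real assume C: "\<forall>f\<in>A. \<forall>g. N s (hdot act g f) \<le> C * exp (\<sigma> s * dist g 0) * N s f"
      and "C \<le> C'"
    have "C * exp (\<sigma> s * dist g 0) * N s f \<le> C' * exp (\<sigma> s * dist g 0) * N s f" if "f \<in> A" for f and g :: 'h
      using \<open>C \<le> C'\<close> N_nonneg[OF assms that] by (intro mult_right_mono) auto
    with C show "\<forall>f\<in>A. \<forall>g. N s (hdot act g f) \<le> C' * exp (\<sigma> s * dist g 0) * N s f"
      by (meson order_trans)
  qed
qed

lemma N_mult_le:
  assumes "1 \<le> s"
  shows "\<exists>C\<ge>0. \<forall>f\<in>A. \<forall>g\<in>A. N s (\<lambda>x. f x * g x) \<le> C * N (s + 1) f * N (s + 1) g"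
proof -
  obtain C where "\<forall>f\<in>A. \<forall>g\<in>A. N s (\<lambda>x. f x * g x) \<le> C * N (s + 1) f * N (s + 1) g"
    using seminorms assms unfolding seminorm_family_def by blast
  then show ?thesis
  proof (rule ex_constant_ge)
    fix C C' :: real assume C: "\<forall>f\<in>A. \<forall>g\<in>A. N s (\<lambda>x. f x * g x) \<le> C * N (s + 1) f * N (s + 1) g"
      and "C \<le> C'"
    have "C * N (s + 1) f * N (s + 1) g \<le> C' * N (s + 1) f * N (s + 1) g" if "f \<in> A" "g \<in> A" for f g
      using \<open>C \<le> C'\<close> N_nonneg[of "s + 1"] that by (intro mult_right_mono) auto
    with C show "\<forall>f\<in>A. \<forall>g\<in>A. N s (\<lambda>x. f x * g x) \<le> C' * N (s + 1) f * N (s + 1) g"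
      by (meson order_trans)
  qed
qed

lemma AE_abs_le_N:
  assumes "1 \<le> s"
  shows "\<exists>C\<ge>1. \<forall>f\<in>A. AE x in M. \<bar>f x\<bar> \<le> C * N s f"
proof -
  obtain C where "\<forall>f\<in>A. AE x in M. \<bar>f x\<bar> \<le> C * N s f"
    using seminorms assms unfolding seminorm_family_def by blast
  then show ?thesis
  proof (rule ex_constant_ge)
    fix C C' :: real assume C: "\<forall>f\<in>A. AE x in M. \<bar>f x\<bar> \<le> C * N s f" and "C \<le> C'"
    have "C * N s f \<le> C' * N s f" if "f \<in> A" for f
      using \<open>C \<le> C'\<close> N_nonneg[OF assms that] by (rule mult_right_mono)
    with C show "\<forall>f\<in>A. AE x in M. \<bar>f x\<bar> \<le> C' * N s f"
      by fastforce
  qed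
qed

lemma N_prod_le:
  assumes "1 \<le> m"
  shows "1 \<le> t \<Longrightarrow> \<exists>C\<ge>0. \<forall>(S::'i set) u. finite S \<and> card S = m \<and> (\<forall>i\<in>S. u i \<in> A) \<longrightarrow>
           N t (\<lambda>x. \<Prod>i\<in>S. u i x) \<le> C * (\<Prod>i\<in>S. N (t + m) (u i))"
  using assms
proof (induction m arbitrary: t rule: nat_induct_at_least)
  case base
  obtain C where C: "C \<ge> 0" "\<forall>f\<in>A. N t f \<le> C * N (t + 1) f"
    using N_Suc_le[OF base] by blast
  have "N t (\<lambda>x. \<Prod>i\<in>S. u i x) \<le> C * (\<Prod>i\<in>S. N (t + 1) (u i))"
    if "card S = 1" "\<forall>i\<in>S. u i \<in> A" for S :: "'i set" and u
    using that C by (auto simp: card_1_singleton_iff)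
  then show ?case using C by blast
next
  case (Suc m)
  obtain C1 where C1: "C1 \<ge> 0" "\<forall>f\<in>A. \<forall>g\<in>A. N t (\<lambda>x. f x * g x) \<le> C1 * N (t + 1) f * N (t + 1) g"
    using N_mult_le[OF Suc.prems] by blast
  obtain C2 where C2: "C2 \<ge> 0" "\<forall>f\<in>A. N (t + 1) f \<le> C2 * N (t + Suc m) f"
    using N_index_mono[of "t + 1" "t + Suc m"] by auto
  obtain C3 where C3: "C3 \<ge> 0" "\<forall>(S::'i set) u. finite S \<and> card S = m \<and> (\<forall>i\<in>S. u i \<in> A) \<longrightarrow>
      N (t + 1) (\<lambda>x. \<Prod>i\<in>S. u i x) \<le> C3 * (\<Prod>i\<in>S. N (t + Suc m) (u i))"
    using Suc.IH[of "t + 1"] by auto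
  have "N t (\<lambda>x. \<Prod>i\<in>S. u i x) \<le> (C1 * C2 * C3) * (\<Prod>i\<in>S. N (t + Suc m) (u i))"
    if S: "finite S" "card S = Suc m" "\<forall>i\<in>S. u i \<in> A" for S :: "'i set" and u
  proof -
    obtain a S' where S': "S = insert a S'" "a \<notin> S'" "finite S'" "card S' = m"
      using S by (metis card_Suc_eq finite_insert)
    have ua: "u a \<in> A" and uS': "\<forall>i\<in>S'. u i \<in> A"
      using S S' by auto
    have prod_S': "(\<lambda>x. \<Prod>i\<in>S'. u i x) \<in> A"
      using S' Suc.hyps uS' by (intro prod_in_A) auto
    have "N t (\<lambda>x. \<Prod>i\<in>S. u i x) = N t (\<lambda>x. u a x * (\<Prod>i\<in>S'. u i x))"
      using S' by simp
    also have "\<dots> \<le> C1 * N (t + 1) (u a) * N (t + 1) (\<lambda>x. \<Prod>i\<in>S'. u i x)"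
      using C1(2)[rule_format, OF ua prod_S'] by simp
    also have "\<dots> \<le> C1 * (C2 * N (t + Suc m) (u a)) * (C3 * (\<Prod>i\<in>S'. N (t + Suc m) (u i)))"
      using C1 C2 C3 S' ua uS' prod_S' N_nonneg[of "t + 1"] N_nonneg[of "t + Suc m"]
      by (intro mult_mono mult_left_mono) auto
    also have "\<dots> = (C1 * C2 * C3) * (\<Prod>i\<in>S. N (t + Suc m) (u i))"
      using S' by (simp add: algebra_simps)
    finally show ?thesis .
  qed
  then show ?case using C1 C2 C3 by (intro exI[of _ "C1 * C2 * C3"]) auto
qed

lemma N_hdot_dist_le:
  assumes "1 \<le> t" "t \<le> s"
  shows "\<exists>C\<ge>0. \<forall>f\<in>A. \<forall>g \<alpha>. dist g 0 \<le> \<alpha> \<longrightarrow> N t (hdot act g f) \<le> C * exp (\<sigma> s * \<alpha>) * N s f"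
proof -
  obtain CH where CH: "CH \<ge> 0"
      "\<forall>f\<in>A. \<forall>g. N t (hdot act g f) \<le> CH * exp (\<sigma> t * dist g 0) * N t f"
    using N_hdot_le[OF assms(1)] by auto
  obtain CN where CN: "CN \<ge> 0" "\<forall>f\<in>A. N t f \<le> CN * N s f"
    using N_index_mono[OF assms] by auto
  have "N t (hdot act g f) \<le> (CH * CN) * exp (\<sigma> s * \<alpha>) * N s f"
    if f: "f \<in> A" and g: "dist g 0 \<le> \<alpha>" for f and g :: 'h and \<alpha>
  proof -
    have "\<sigma> t * dist g 0 \<le> \<sigma> s * \<alpha>"
      using g assms \<sigma>_mono[OF assms] \<sigma>_nonneg[of s] by (intro mult_mono) auto
    then have exp_le: "exp (\<sigma> t * dist g 0) \<le> exp (\<sigma> s * \<alpha>)"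
      by simp
    have "N t (hdot act g f) \<le> CH * exp (\<sigma> t * dist g 0) * N t f"
      using CH(2) f by blast
    also have "\<dots> \<le> CH * exp (\<sigma> s * \<alpha>) * (CN * N s f)"
    proof (rule mult_mono)
      show "CH * exp (\<sigma> t * dist g 0) \<le> CH * exp (\<sigma> s * \<alpha>)"
        using exp_le CH(1) by (rule mult_left_mono)
      show "N t f \<le> CN * N s f"
        using CN(2) f by blast
    qed (use CH(1) N_nonneg[OF assms(1) f] in auto)
    finally show ?thesis
      by (simp add: mult_ac)
  qed
  with CH(1) CN(1) show ?thesis
    by (intro exI[of _ "CH * CN"]) auto
qed

lemma N_prod_translates_card_le:
  assumes "1 \<le> t" "1 \<le> m" "t + m \<le> s"
  shows "\<exists>C. \<forall>(S::'i set) u f \<alpha>. finite S \<and> card S = m \<and> f \<in> A \<and> (\<forall>i\<in>S. dist (u i) 0 \<le> \<alpha>) \<longrightarrow>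
      N t (\<lambda>x. \<Prod>i\<in>S. hdot act (u i) f x) \<le> C * exp (\<sigma> s * \<alpha>) ^ m * N s f ^ m"
proof -
  obtain CP where CP: "CP \<ge> 0" "\<forall>(S::'i set) u. finite S \<and> card S = m \<and> (\<forall>i\<in>S. u i \<in> A) \<longrightarrow>
      N t (\<lambda>x. \<Prod>i\<in>S. u i x) \<le> CP * (\<Prod>i\<in>S. N (t + m) (u i))"
    using N_prod_le[of m t] assms by auto
  obtain CH where CH: "CH \<ge> 0"
      "\<forall>f\<in>A. \<forall>g \<alpha>. dist g 0 \<le> \<alpha> \<longrightarrow> N (t + m) (hdot act g f) \<le> CH * exp (\<sigma> s * \<alpha>) * N s f"
    using N_hdot_dist_le[of "t + m" s] assms by auto
  have "N t (\<lambda>x. \<Prod>i\<in>S. hdot act (u i) f x) \<le> CP * CH ^ m * exp (\<sigma> s * \<alpha>) ^ m * N s f ^ m"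
    if S: "finite S" "card S = m" and f: "f \<in> A" and u: "\<forall>i\<in>S. dist (u i) 0 \<le> \<alpha>"
    for S :: "'i set" and u f \<alpha>
  proof -
    have "N t (\<lambda>x. \<Prod>i\<in>S. hdot act (u i) f x) \<le> CP * (\<Prod>i\<in>S. N (t + m) (hdot act (u i) f))"
      by (rule CP(2)[rule_format]) (use S f hdot_in_A in auto)
    also have "\<dots> \<le> CP * (\<Prod>i\<in>S. CH * exp (\<sigma> s * \<alpha>) * N s f)"
      using CP CH u f hdot_in_A N_nonneg assms by (intro mult_left_mono prod_mono) auto
    also have "\<dots> = CP * CH ^ m * exp (\<sigma> s * \<alpha>) ^ m * N s f ^ m"
      using S by (simp add: power_mult_distrib)
    finally show ?thesis .
  qed
  then show ?thesis
    by blast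
qed

lemma N_prod_translates_le:
  assumes "1 \<le> t" "t + r \<le> s"
  shows "\<exists>C\<ge>0. \<forall>(S::'i set) u f \<alpha>. finite S \<and> S \<noteq> {} \<and> card S \<le> r \<and> f \<in> A \<and>
      (\<forall>i\<in>S. dist (u i) 0 \<le> \<alpha>) \<longrightarrow>
      N t (\<lambda>x. \<Prod>i\<in>S. hdot act (u i) f x) \<le> C * exp (\<sigma> s * \<alpha>) ^ card S * N s f ^ card S"
proof -
  define bound where "bound m C \<longleftrightarrow> (\<forall>(S::'i set) u f \<alpha>. finite S \<and> card S = m \<and> f \<in> A \<and>
      (\<forall>i\<in>S. dist (u i) 0 \<le> \<alpha>) \<longrightarrow>
      N t (\<lambda>x. \<Prod>i\<in>S. hdot act (u i) f x) \<le> C * exp (\<sigma> s * \<alpha>) ^ m * N s f ^ m)" for m C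
  have "\<exists>C\<ge>0. \<forall>m\<in>{1..r}. bound m C"
  proof (rule ex_uniform_constant)
    show "\<exists>C. bound m C" if "m \<in> {1..r}" for m
      unfolding bound_def using that assms by (intro N_prod_translates_card_le) auto
  next
    fix m C C' assume bound: "bound m C" and "C \<le> C'"
    show "bound m C'"
      unfolding bound_def
    proof (intro allI impI)
      fix S :: "'i set" and u :: "'i \<Rightarrow> 'h" and f \<alpha>
      assume H: "finite S \<and> card S = m \<and> f \<in> A \<and> (\<forall>i\<in>S. dist (u i) 0 \<le> \<alpha>)"
      then have "N t (\<lambda>x. \<Prod>i\<in>S. hdot act (u i) f x) \<le> C * exp (\<sigma> s * \<alpha>) ^ m * N s f ^ m"
        using bound unfolding bound_def by blast
      also have "\<dots> \<le> C' * exp (\<sigma> s * \<alpha>) ^ m * N s f ^ m"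
        using \<open>C \<le> C'\<close> N_nonneg[of s f] assms H by (intro mult_right_mono) auto
      finally show "N t (\<lambda>x. \<Prod>i\<in>S. hdot act (u i) f x) \<le> C' * exp (\<sigma> s * \<alpha>) ^ m * N s f ^ m" .
    qed
  qed simp
  then obtain C where C: "C \<ge> 0" "\<forall>m\<in>{1..r}. bound m C"
    by blast
  have "card S \<in> {1..r}" if "finite S" "S \<noteq> {}" "card S \<le> r" for S :: "'i set"
    using that by (simp add: Suc_le_eq card_gt_0_iff)
  with C show ?thesis
    unfolding bound_def by blast
qed

lemma mixing_separated_card_le:
  assumes "2 \<le> k" "k \<le> r" "sk k < t"
  shows "\<exists>C\<ge>0. \<forall>(K::'j set) fs hs \<beta>. finite K \<and> card K = k \<and> (\<forall>j\<in>K. fs j \<in> A) \<and> 0 \<le> \<beta> \<and>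
      (\<forall>a\<in>K. \<forall>b\<in>K. a \<noteq> b \<longrightarrow> \<beta> \<le> dist (hs a) (hs b)) \<longrightarrow>
      \<bar>integral\<^sup>L M (\<lambda>x. \<Prod>j\<in>K. hdot act (hs j) (fs j) x) - (\<Prod>j\<in>K. integral\<^sup>L M (fs j))\<bar>
        \<le> C * exp (- \<delta> r * \<beta>) * (\<Prod>j\<in>K. N t (fs j))"
proof -
  obtain C where C: "\<forall>fs hs. (\<forall>i\<in>{1..k}. fs i \<in> A) \<longrightarrow>
      \<bar>integral\<^sup>L M (\<lambda>x. \<Prod>i\<in>{1..k}. hdot act (hs i) (fs i) x) - (\<Prod>i\<in>{1..k}. integral\<^sup>L M (fs i))\<bar>
        \<le> C * exp (- \<delta> k * Min {dist (hs i) (hs j) | i j. i \<in> {1..k} \<and> j \<in> {1..k} \<and> i \<noteq> j})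
          * (\<Prod>i\<in>{1..k}. N t (fs i))"
    using mixing assms unfolding exp_mixing_all_orders_def by blast
  have \<delta>: "0 < \<delta> k" "\<delta> r \<le> \<delta> k"
    using mixing conventions assms unfolding exp_mixing_all_orders_def parameter_conventions_def by auto
  have "\<bar>integral\<^sup>L M (\<lambda>x. \<Prod>j\<in>K. hdot act (hs j) (fs j) x) - (\<Prod>j\<in>K. integral\<^sup>L M (fs j))\<bar>
        \<le> max C 0 * exp (- \<delta> r * \<beta>) * (\<Prod>j\<in>K. N t (fs j))"
    if K: "finite K" "card K = k" and fs: "\<forall>j\<in>K. fs j \<in> A" and \<beta>: "0 \<le> \<beta>"
      and sep: "\<forall>a\<in>K. \<forall>b\<in>K. a \<noteq> b \<longrightarrow> \<beta> \<le> dist (hs a) (hs b)"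
    for K :: "'j set" and fs and hs :: "'j \<Rightarrow> 'h" and \<beta>
  proof -
    obtain e where e: "bij_betw e {1..k} K"
      using ex_bij_betw_nat_finite_1 K by blast
    define D where "D = {dist (hs (e i)) (hs (e j)) | i j. i \<in> {1..k} \<and> j \<in> {1..k} \<and> i \<noteq> j}"
    have "\<beta> \<le> dist (hs (e i)) (hs (e j))" if "i \<in> {1..k}" "j \<in> {1..k}" "i \<noteq> j" for i j
    proof -
      have "e i \<in> K" "e j \<in> K" "e i \<noteq> e j"
        using that bij_betw_apply[OF e] inj_onD[OF bij_betw_imp_inj_on[OF e]] by auto
      with sep show ?thesis
        by blast
    qed
    then have "\<beta> \<le> Min D"
      unfolding D_def using assms(1) by (intro Min_dist_ge) auto
    then have "\<delta> r * \<beta> \<le> \<delta> k * Min D"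
      using \<delta> \<beta> by (intro mult_mono) auto
    then have exp_le: "exp (- \<delta> k * Min D) \<le> exp (- \<delta> r * \<beta>)"
      by simp
    have nonneg: "0 \<le> (\<Prod>j\<in>K. N t (fs j))"
      using fs N_nonneg[of t] assms by (intro prod_nonneg) auto
    have "(\<lambda>x. \<Prod>i\<in>{1..k}. hdot act (hs (e i)) (fs (e i)) x) = (\<lambda>x. \<Prod>j\<in>K. hdot act (hs j) (fs j) x)"
      by (rule ext, rule prod.reindex_bij_betw[OF e])
    moreover have "(\<Prod>i\<in>{1..k}. integral\<^sup>L M (fs (e i))) = (\<Prod>j\<in>K. integral\<^sup>L M (fs j))"
      "(\<Prod>i\<in>{1..k}. N t (fs (e i))) = (\<Prod>j\<in>K. N t (fs j))"
      using prod.reindex_bij_betw[OF e] by simp_all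
    moreover have "\<forall>i\<in>{1..k}. fs (e i) \<in> A"
      using fs bij_betw_apply[OF e] by blast
    ultimately have "\<bar>integral\<^sup>L M (\<lambda>x. \<Prod>j\<in>K. hdot act (hs j) (fs j) x) - (\<Prod>j\<in>K. integral\<^sup>L M (fs j))\<bar>
        \<le> C * exp (- \<delta> k * Min D) * (\<Prod>j\<in>K. N t (fs j))"
      using C[rule_format, of "fs \<circ> e" "hs \<circ> e"] unfolding D_def by simp
    also have "\<dots> \<le> max C 0 * exp (- \<delta> r * \<beta>) * (\<Prod>j\<in>K. N t (fs j))"
      using exp_le nonneg by (intro mult_right_mono mult_mono) auto
    finally show ?thesis .
  qed
  then show ?thesis
    by (intro exI[of _ "max C 0"]) auto
qed

lemma mixing_separated_le:
  assumes "\<forall>k\<in>{2..r}. sk k < t"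
  shows "\<exists>C\<ge>0. \<forall>(K::'j set) fs hs \<beta>. finite K \<and> 2 \<le> card K \<and> card K \<le> r \<and> (\<forall>j\<in>K. fs j \<in> A) \<and>
      0 \<le> \<beta> \<and> (\<forall>a\<in>K. \<forall>b\<in>K. a \<noteq> b \<longrightarrow> \<beta> \<le> dist (hs a) (hs b)) \<longrightarrow>
      \<bar>integral\<^sup>L M (\<lambda>x. \<Prod>j\<in>K. hdot act (hs j) (fs j) x) - (\<Prod>j\<in>K. integral\<^sup>L M (fs j))\<bar>
        \<le> C * exp (- \<delta> r * \<beta>) * (\<Prod>j\<in>K. N t (fs j))"
proof -
  define bound where "bound k C \<longleftrightarrow> (\<forall>(K::'j set) fs hs \<beta>. finite K \<and> card K = k \<and> (\<forall>j\<in>K. fs j \<in> A) \<and>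
      0 \<le> \<beta> \<and> (\<forall>a\<in>K. \<forall>b\<in>K. a \<noteq> b \<longrightarrow> \<beta> \<le> dist (hs a) (hs b)) \<longrightarrow>
      \<bar>integral\<^sup>L M (\<lambda>x. \<Prod>j\<in>K. hdot act (hs j) (fs j) x) - (\<Prod>j\<in>K. integral\<^sup>L M (fs j))\<bar>
        \<le> C * exp (- \<delta> r * \<beta>) * (\<Prod>j\<in>K. N t (fs j)))" for k C
  have "\<exists>C\<ge>0. \<forall>k\<in>{2..r}. bound k C"
  proof (rule ex_uniform_constant)
    show "\<exists>C. bound k C" if "k \<in> {2..r}" for k
      using mixing_separated_card_le[of k r t] assms that unfolding bound_def by auto
  next
    fix k C C' assume bound: "bound k C" and "C \<le> C'" and k: "k \<in> {2..r}"
    have t: "1 \<le> t"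
      using assms k by fastforce
    show "bound k C'"
      unfolding bound_def
    proof (intro allI impI)
      fix K :: "'j set" and fs and hs :: "'j \<Rightarrow> 'h" and \<beta>
      assume H: "finite K \<and> card K = k \<and> (\<forall>j\<in>K. fs j \<in> A) \<and> 0 \<le> \<beta> \<and>
        (\<forall>a\<in>K. \<forall>b\<in>K. a \<noteq> b \<longrightarrow> \<beta> \<le> dist (hs a) (hs b))"
      then have "\<bar>integral\<^sup>L M (\<lambda>x. \<Prod>j\<in>K. hdot act (hs j) (fs j) x) - (\<Prod>j\<in>K. integral\<^sup>L M (fs j))\<bar>
          \<le> C * exp (- \<delta> r * \<beta>) * (\<Prod>j\<in>K. N t (fs j))"
        using bound unfolding bound_def by blast
      also have "\<dots> \<le> C' * exp (- \<delta> r * \<beta>) * (\<Prod>j\<in>K. N t (fs j))"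
        using \<open>C \<le> C'\<close> H N_nonneg[OF t] by (intro mult_right_mono prod_nonneg) auto
      finally show "\<bar>integral\<^sup>L M (\<lambda>x. \<Prod>j\<in>K. hdot act (hs j) (fs j) x) - (\<Prod>j\<in>K. integral\<^sup>L M (fs j))\<bar>
          \<le> C' * exp (- \<delta> r * \<beta>) * (\<Prod>j\<in>K. N t (fs j))" .
    qed
  qed simp
  then show ?thesis
    unfolding bound_def by auto
qed

section \<open>Cluster decomposition of the correlations\<close>

lemma psi_abs_le:
  assumes "f \<in> A" "AE x in M. \<bar>f x\<bar> \<le> B" "finite I"
  shows "\<bar>psi M act f h I\<bar> \<le> B ^ card I"
proof (cases "I = {}")
  case False
  define F where "F = (\<lambda>x. \<Prod>i\<in>I. hdot act (h i) f x)"
  have F: "F \<in> borel_measurable M"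
    unfolding F_def using assms False by (intro measurable_A prod_in_A hdot_in_A) auto
  have "AE x in M. \<forall>i\<in>I. \<bar>hdot act (h i) f x\<bar> \<le> B"
    using assms by (intro AE_finite_allI AE_hdot_abs_le measurable_A) auto
  then have F_le: "AE x in M. \<bar>F x\<bar> \<le> B ^ card I"
  proof (rule AE_mp, intro AE_I2 impI)
    fix x assume "\<forall>i\<in>I. \<bar>hdot act (h i) f x\<bar> \<le> B"
    then have "(\<Prod>i\<in>I. \<bar>hdot act (h i) f x\<bar>) \<le> (\<Prod>i\<in>I. B)"
      by (intro prod_mono) auto
    then show "\<bar>F x\<bar> \<le> B ^ card I"
      by (simp add: F_def abs_prod)
  qed
  have "integrable M F"
    using prob F F_le by (intro finite_measure.integrable_const_bound) (auto simp: prob_space_def)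
  have "\<bar>integral\<^sup>L M F\<bar> \<le> integral\<^sup>L M (\<lambda>x. \<bar>F x\<bar>)"
    by (rule integral_abs_bound)
  also have "\<dots> \<le> B ^ card I"
    using \<open>integrable M F\<close> F_le by (intro prob_space.integral_le_const[OF prob]) auto
  finally show ?thesis
    using False by (simp add: psi_def F_def)
qed (simp add: psi_def)

lemma psiQ_abs_le:
  assumes "f \<in> A" "AE x in M. \<bar>f x\<bar> \<le> B" "partition_on X Q" "finite X" "I \<subseteq> X"
  shows "\<bar>psiQ M act f h Q I\<bar> \<le> B ^ card I"
proof -
  let ?Q\<^sub>I = "(\<inter>) I ` Q - {{}}"
  have part: "partition_on I ?Q\<^sub>I"
    using partition_on_restrict[OF assms(3), of I] assms(5) by (simp add: Int_absorb2)
  have fin: "finite K" if "K \<in> ?Q\<^sub>I" for K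
    using that assms(4,5) finite_subset by blast
  have "\<bar>psiQ M act f h Q I\<bar> = (\<Prod>K\<in>?Q\<^sub>I. \<bar>psi M act f h K\<bar>)"
    unfolding psiQ_eq_prod_restrict[OF assms(3-5)] abs_prod ..
  also have "\<dots> \<le> (\<Prod>K\<in>?Q\<^sub>I. B ^ card K)"
    using psi_abs_le[OF assms(1,2)] fin by (intro prod_mono) auto
  also have "\<dots> = B ^ card I"
    using product_partition[OF part fin] by (simp add: power_sum)
  finally show ?thesis .
qed

text \<open>The product of the translates of \<open>f\<close> over a cluster \<open>K\<close>, recentred at the representative
  \<open>c\<close>: every factor is then translated by an element of size \<open>dist (h i) (h c)\<close>.\<close>
definition centred_product :: "('x \<Rightarrow> real) \<Rightarrow> (nat \<Rightarrow> 'h) \<Rightarrow> nat \<Rightarrow> nat set \<Rightarrow> 'x \<Rightarrow> real" where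
  "centred_product f h c K = (\<lambda>x. \<Prod>i\<in>K. hdot act (- h c + h i) f x)"

lemma centred_product_in_A: "f \<in> A \<Longrightarrow> finite K \<Longrightarrow> K \<noteq> {} \<Longrightarrow> centred_product f h c K \<in> A"
  unfolding centred_product_def by (intro prod_in_A hdot_in_A)

lemma hdot_centred_product:
  assumes "x \<in> space M"
  shows "hdot act (h c) (centred_product f h c K) x = (\<Prod>i\<in>K. hdot act (h i) f x)"
proof -
  have "hdot act (h c) (centred_product f h c K) x = (\<Prod>i\<in>K. hdot act (h c) (hdot act (- h c + h i) f) x)"
    by (simp add: centred_product_def hdot_def)
  also have "\<dots> = (\<Prod>i\<in>K. hdot act (h i) f x)"
    using hdot_hdot[OF assms] by (simp add: add.assoc[symmetric])
  finally show ?thesis .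
qed

lemma psi_eq_integral_centred_product:
  assumes "f \<in> A" "finite K" "K \<noteq> {}"
  shows "psi M act f h K = integral\<^sup>L M (centred_product f h c K)"
proof -
  have "psi M act f h K = integral\<^sup>L M (\<lambda>x. \<Prod>i\<in>K. hdot act (h i) f x)"
    using assms(3) by (simp add: psi_def)
  also have "\<dots> = integral\<^sup>L M (hdot act (h c) (centred_product f h c K))"
    by (rule Bochner_Integration.integral_cong[OF refl]) (simp add: hdot_centred_product)
  also have "\<dots> = integral\<^sup>L M (centred_product f h c K)"
    using assms by (intro integral_hdot measurable_A centred_product_in_A)
  finally show ?thesis .
qed

lemma psi_eq_integral_prod_centred:
  assumes "f \<in> A" "finite I" "I \<noteq> {}" "partition_on I \<K>"
  shows "psi M act f h I = integral\<^sup>L M (\<lambda>x. \<Prod>K\<in>\<K>. hdot act (h (c K)) (centred_product f h (c K) K) x)"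
proof -
  have "(\<Prod>i\<in>I. hdot act (h i) f x) = (\<Prod>K\<in>\<K>. hdot act (h (c K)) (centred_product f h (c K) K) x)"
    if "x \<in> space M" for x
    using prod.partition[OF assms(2,4)] by (simp add: hdot_centred_product[OF that])
  then show ?thesis
    using assms(3) unfolding psi_def by (auto intro: Bochner_Integration.integral_cong)
qed

lemma psi_clustered_diff_le:
  assumes "\<forall>k\<in>{2..r}. sk k < t"
  shows "\<exists>C\<ge>0. \<forall>I \<K> h f \<beta> c. finite I \<and> partition_on I \<K> \<and> 2 \<le> card \<K> \<and> card \<K> \<le> r \<and> f \<in> A \<and> 0 \<le> \<beta> \<and>
      (\<forall>K\<in>\<K>. \<forall>K'\<in>\<K>. K \<noteq> K' \<longrightarrow> \<beta> \<le> dist (h (c K)) (h (c K'))) \<longrightarrow>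
      \<bar>psi M act f h I - (\<Prod>K\<in>\<K>. psi M act f h K)\<bar>
        \<le> C * exp (- \<delta> r * \<beta>) * (\<Prod>K\<in>\<K>. N t (centred_product f h (c K) K))"
proof -
  obtain C where "C \<ge> 0" and C: "\<forall>(\<K>::nat set set) fs hs \<beta>. finite \<K> \<and> 2 \<le> card \<K> \<and> card \<K> \<le> r \<and>
      (\<forall>K\<in>\<K>. fs K \<in> A) \<and> 0 \<le> \<beta> \<and> (\<forall>a\<in>\<K>. \<forall>b\<in>\<K>. a \<noteq> b \<longrightarrow> \<beta> \<le> dist (hs a) (hs b)) \<longrightarrow>
      \<bar>integral\<^sup>L M (\<lambda>x. \<Prod>K\<in>\<K>. hdot act (hs K) (fs K) x) - (\<Prod>K\<in>\<K>. integral\<^sup>L M (fs K))\<bar>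
        \<le> C * exp (- \<delta> r * \<beta>) * (\<Prod>K\<in>\<K>. N t (fs K))"
    using mixing_separated_le[OF assms] by blast
  show ?thesis
  proof (intro exI[of _ C] conjI allI impI)
    fix I \<K> and h :: "nat \<Rightarrow> 'h" and f \<beta> and c :: "nat set \<Rightarrow> nat"
    assume H: "finite I \<and> partition_on I \<K> \<and> 2 \<le> card \<K> \<and> card \<K> \<le> r \<and> f \<in> A \<and> 0 \<le> \<beta> \<and>
      (\<forall>K\<in>\<K>. \<forall>K'\<in>\<K>. K \<noteq> K' \<longrightarrow> \<beta> \<le> dist (h (c K)) (h (c K')))"
    then have I: "finite I" "partition_on I \<K>" "2 \<le> card \<K>" and f: "f \<in> A"
      by blast+
    have blocks: "finite K" "K \<noteq> {}" if "K \<in> \<K>" for K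
      using partition_on_block[OF I(2) that] I(1) finite_subset by auto
    have "\<K> \<noteq> {}"
      using I(3) by auto
    then have "I \<noteq> {}"
      using partition_on_block[OF I(2)] by blast
    then have psi_I: "psi M act f h I
        = integral\<^sup>L M (\<lambda>x. \<Prod>K\<in>\<K>. hdot act (h (c K)) (centred_product f h (c K) K) x)"
      by (rule psi_eq_integral_prod_centred[OF f I(1) _ I(2)])
    have psi_K: "(\<Prod>K\<in>\<K>. psi M act f h K) = (\<Prod>K\<in>\<K>. integral\<^sup>L M (centred_product f h (c K) K))"
      using psi_eq_integral_centred_product[OF f] blocks by (intro prod.cong) auto
    have "finite \<K>"
      using I finite_elements by blast
    moreover have "\<forall>K\<in>\<K>. centred_product f h (c K) K \<in> A"
      using f blocks centred_product_in_A by blast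
    ultimately show "\<bar>psi M act f h I - (\<Prod>K\<in>\<K>. psi M act f h K)\<bar>
        \<le> C * exp (- \<delta> r * \<beta>) * (\<Prod>K\<in>\<K>. N t (centred_product f h (c K) K))"
      unfolding psi_I psi_K using H
      by (intro C[rule_format, where fs = "\<lambda>K. centred_product f h (c K) K" and hs = "\<lambda>K. h (c K)"]) simp
  qed (rule \<open>C \<ge> 0\<close>)
qed

lemma N_centred_product_le:
  assumes "1 \<le> t" "t + r \<le> s"
  shows "\<exists>C\<ge>0. \<forall>K h f \<alpha> c. finite K \<and> K \<noteq> {} \<and> card K \<le> r \<and> f \<in> A \<and> (\<forall>i\<in>K. dist (h i) (h c) \<le> \<alpha>) \<longrightarrow>
      N t (centred_product f h c K) \<le> C * exp (\<sigma> s * \<alpha>) ^ card K * N s f ^ card K"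
proof -
  obtain C where "C \<ge> 0" and C: "\<forall>(K::nat set) u f \<alpha>. finite K \<and> K \<noteq> {} \<and> card K \<le> r \<and> f \<in> A \<and>
      (\<forall>i\<in>K. dist (u i) 0 \<le> \<alpha>) \<longrightarrow>
      N t (\<lambda>x. \<Prod>i\<in>K. hdot act (u i) f x) \<le> C * exp (\<sigma> s * \<alpha>) ^ card K * N s f ^ card K"
    using N_prod_translates_le[OF assms] by blast
  have "N t (centred_product f h c K) \<le> C * exp (\<sigma> s * \<alpha>) ^ card K * N s f ^ card K"
    if "finite K" "K \<noteq> {}" "card K \<le> r" "f \<in> A" and diam: "\<forall>i\<in>K. dist (h i) (h c) \<le> \<alpha>"
    for K and h :: "nat \<Rightarrow> 'h" and f \<alpha> c
  proof -
    have "\<forall>i\<in>K. dist (- h c + h i) 0 \<le> \<alpha>"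
      using diam dist_left_translate_zero[OF left_inv_group] by simp
    then show ?thesis
      unfolding centred_product_def using that by (intro C[rule_format]) simp
  qed
  with \<open>C \<ge> 0\<close> show ?thesis
    by blast
qed

lemma N_prod_centred_le:
  assumes "1 \<le> t" "t + r \<le> s"
  shows "\<exists>C\<ge>0. \<forall>I \<K> h f \<alpha> c. finite I \<and> card I \<le> r \<and> partition_on I \<K> \<and> f \<in> A \<and>
      (\<forall>K\<in>\<K>. \<forall>i\<in>K. dist (h i) (h (c K)) \<le> \<alpha>) \<longrightarrow>
      (\<Prod>K\<in>\<K>. N t (centred_product f h (c K) K)) \<le> C * exp (\<sigma> s * \<alpha>) ^ card I * N s f ^ card I"
proof -
  obtain C where "C \<ge> 0" and C: "\<forall>K (h::nat \<Rightarrow> 'h) f \<alpha> c. finite K \<and> K \<noteq> {} \<and> card K \<le> r \<and> f \<in> A \<and>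
      (\<forall>i\<in>K. dist (h i) (h c) \<le> \<alpha>) \<longrightarrow>
      N t (centred_product f h c K) \<le> C * exp (\<sigma> s * \<alpha>) ^ card K * N s f ^ card K"
    using N_centred_product_le[OF assms] by blast
  have "(\<Prod>K\<in>\<K>. N t (centred_product f h (c K) K)) \<le> max 1 C ^ r * exp (\<sigma> s * \<alpha>) ^ card I * N s f ^ card I"
    if I: "finite I" "card I \<le> r" "partition_on I \<K>" and f: "f \<in> A"
      and diam: "\<forall>K\<in>\<K>. \<forall>i\<in>K. dist (h i) (h (c K)) \<le> \<alpha>"
    for I \<K> and h :: "nat \<Rightarrow> 'h" and f \<alpha> c
  proof -
    let ?E = "exp (\<sigma> s * \<alpha>)" and ?L = "N s f"
    have blocks: "finite K" "K \<noteq> {}" "card K \<le> r" if "K \<in> \<K>" for K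
    proof -
      show "finite K" "K \<noteq> {}"
        using partition_on_block[OF I(3) that] I(1) finite_subset by auto
      then show "card K \<le> r"
        using partition_on_block[OF I(3) that] I(1,2) card_mono le_trans by blast
    qed
    have "(\<Prod>K\<in>\<K>. N t (centred_product f h (c K) K)) \<le> (\<Prod>K\<in>\<K>. C * ?E ^ card K * ?L ^ card K)"
      using C blocks f diam N_nonneg[OF assms(1)] centred_product_in_A by (intro prod_mono) auto
    also have "\<dots> = C ^ card \<K> * ?E ^ card I * ?L ^ card I"
      using product_partition[OF I(3)] blocks by (simp add: prod.distrib power_sum[symmetric])
    also have "\<dots> \<le> max 1 C ^ r * ?E ^ card I * ?L ^ card I"
      using card_partition_on_le[OF I(1,3)] I(2) \<open>C \<ge> 0\<close> N_nonneg[OF _ f] assms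
      by (intro mult_right_mono power_le_max_one_power) auto
    finally show ?thesis .
  qed
  then show ?thesis
    by (intro exI[of _ "max 1 C ^ r"]) auto
qed

lemma psi_clustered_le:
  assumes "sk r + r < s"
  shows "\<exists>C\<ge>0. \<forall>I \<K> h f \<alpha> \<beta>. finite I \<and> card I \<le> r \<and> partition_on I \<K> \<and> 2 \<le> card \<K> \<and> f \<in> A \<and> 0 \<le> \<beta> \<and>
      clustered h \<K> \<alpha> \<beta> \<longrightarrow>
      \<bar>psi M act f h I - (\<Prod>K\<in>\<K>. psi M act f h K)\<bar>
        \<le> C * exp (- \<delta> r * \<beta>) * exp (\<sigma> s * \<alpha>) ^ card I * N s f ^ card I"
proof -
  txt \<open>Mixing of every order \<open>k \<le> r\<close> is available at index \<open>t = s_r + 1\<close>, and products of at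
    most \<open>r\<close> translates cost \<open>r\<close> further indices.\<close>
  define t where "t = sk r + 1"
  have t: "1 \<le> t" "t + r \<le> s"
    using assms unfolding t_def by simp_all
  have t3: "\<forall>k\<in>{2..r}. sk k < t"
  proof
    fix k assume "k \<in> {2..r}"
    then have "sk k \<le> sk r"
      using conventions unfolding parameter_conventions_def by simp
    then show "sk k < t"
      unfolding t_def by simp
  qed
  obtain C1 where "C1 \<ge> 0" and C1: "\<forall>I \<K> (h::nat \<Rightarrow> 'h) f \<beta> c. finite I \<and> partition_on I \<K> \<and> 2 \<le> card \<K> \<and>
      card \<K> \<le> r \<and> f \<in> A \<and> 0 \<le> \<beta> \<and> (\<forall>K\<in>\<K>. \<forall>K'\<in>\<K>. K \<noteq> K' \<longrightarrow> \<beta> \<le> dist (h (c K)) (h (c K'))) \<longrightarrow>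
      \<bar>psi M act f h I - (\<Prod>K\<in>\<K>. psi M act f h K)\<bar>
        \<le> C1 * exp (- \<delta> r * \<beta>) * (\<Prod>K\<in>\<K>. N t (centred_product f h (c K) K))"
    using psi_clustered_diff_le[OF t3] by blast
  obtain C2 where "C2 \<ge> 0" and C2: "\<forall>I \<K> (h::nat \<Rightarrow> 'h) f \<alpha> c. finite I \<and> card I \<le> r \<and> partition_on I \<K> \<and> f \<in> A \<and>
      (\<forall>K\<in>\<K>. \<forall>i\<in>K. dist (h i) (h (c K)) \<le> \<alpha>) \<longrightarrow>
      (\<Prod>K\<in>\<K>. N t (centred_product f h (c K) K)) \<le> C2 * exp (\<sigma> s * \<alpha>) ^ card I * N s f ^ card I"
    using N_prod_centred_le[OF t] by blast
  show ?thesis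
  proof (intro exI[of _ "C1 * C2"] conjI allI impI; (elim conjE)?)
    fix I \<K> and h :: "nat \<Rightarrow> 'h" and f \<alpha> \<beta>
    assume I: "finite I" "card I \<le> r" "partition_on I \<K>" "2 \<le> card \<K>" and f: "f \<in> A" "0 \<le> \<beta>"
      and cl: "clustered h \<K> \<alpha> \<beta>"
    define c where "c K = (SOME i. i \<in> K)" for K :: "nat set"
    have "c K \<in> K" if "K \<in> \<K>" for K
      using partition_on_block(2)[OF I(3) that] unfolding c_def by (metis some_in_eq)
    then have reps: "\<forall>K\<in>\<K>. c K \<in> K"
      by blast
    note sep = clustered_representatives(1)[OF cl reps] and diam = clustered_representatives(2)[OF cl reps]
    have "card \<K> \<le> r"
      using card_partition_on_le[OF I(1,3)] I(2) by simp
    then have "\<bar>psi M act f h I - (\<Prod>K\<in>\<K>. psi M act f h K)\<bar>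
        \<le> C1 * exp (- \<delta> r * \<beta>) * (\<Prod>K\<in>\<K>. N t (centred_product f h (c K) K))"
      using I f sep by (intro C1[rule_format]) simp
    also have "\<dots> \<le> C1 * exp (- \<delta> r * \<beta>) * (C2 * exp (\<sigma> s * \<alpha>) ^ card I * N s f ^ card I)"
      using I f diam \<open>C1 \<ge> 0\<close> by (intro mult_left_mono C2[rule_format]) simp_all
    finally show "\<bar>psi M act f h I - (\<Prod>K\<in>\<K>. psi M act f h K)\<bar>
        \<le> C1 * C2 * exp (- \<delta> r * \<beta>) * exp (\<sigma> s * \<alpha>) ^ card I * N s f ^ card I"
      by (simp add: mult_ac)
  qed (use \<open>C1 \<ge> 0\<close> \<open>C2 \<ge> 0\<close> in simp)
qed

lemma psi_psiQ_Delta_le: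
  assumes "sk r + r < s"
  shows "\<exists>C\<ge>0. \<forall>\<alpha> \<beta> Q h f I. 0 \<le> \<alpha> \<and> \<alpha> < \<beta> \<and> partition_on {1..r} Q \<and> h \<in> Delta Q \<alpha> \<beta> \<and> f \<in> A \<and>
      I \<subseteq> {1..r} \<longrightarrow>
      \<bar>psi M act f h I - psiQ M act f h Q I\<bar> \<le> C * exp (- (\<beta> * \<delta> r - real r * \<alpha> * \<sigma> s)) * N s f ^ card I"
proof -
  obtain C where "C \<ge> 0" and C: "\<forall>I \<K> (h::nat \<Rightarrow> 'h) f \<alpha> \<beta>. finite I \<and> card I \<le> r \<and> partition_on I \<K> \<and>
      2 \<le> card \<K> \<and> f \<in> A \<and> 0 \<le> \<beta> \<and> clustered h \<K> \<alpha> \<beta> \<longrightarrow>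
      \<bar>psi M act f h I - (\<Prod>K\<in>\<K>. psi M act f h K)\<bar>
        \<le> C * exp (- \<delta> r * \<beta>) * exp (\<sigma> s * \<alpha>) ^ card I * N s f ^ card I"
    using psi_clustered_le[OF assms] by blast
  show ?thesis
  proof (intro exI[of _ C] conjI allI impI; (elim conjE)?)
    fix \<alpha> \<beta> Q and h :: "nat \<Rightarrow> 'h" and f I
    assume \<alpha>\<beta>: "0 \<le> \<alpha>" "\<alpha> < \<beta>" and Q: "partition_on {1..r} Q" "h \<in> Delta Q \<alpha> \<beta>"
      and "f \<in> A" "I \<subseteq> {1..r}"
    define \<K> where "\<K> = (\<inter>) I ` Q - {{}}"
    have I: "finite I" "card I \<le> r" "partition_on I \<K>"
      using finite_subset[OF \<open>I \<subseteq> {1..r}\<close>] card_mono[OF _ \<open>I \<subseteq> {1..r}\<close>]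
        partition_on_restrict[OF Q(1), of I] \<open>I \<subseteq> {1..r}\<close>
      unfolding \<K>_def by (simp_all add: Int_absorb2)
    have rhs_nonneg: "0 \<le> C * exp (- (\<beta> * \<delta> r - real r * \<alpha> * \<sigma> s)) * N s f ^ card I"
      using \<open>C \<ge> 0\<close> \<open>f \<in> A\<close> N_nonneg[of s f] assms by simp
    show "\<bar>psi M act f h I - psiQ M act f h Q I\<bar> \<le> C * exp (- (\<beta> * \<delta> r - real r * \<alpha> * \<sigma> s)) * N s f ^ card I"
    proof (cases "card \<K> < 2")
      case True
      then show ?thesis
        using psiQ_eq_psi_if_one_block[OF Q(1) _ \<open>I \<subseteq> {1..r}\<close>, of M act f h] rhs_nonneg unfolding \<K>_def by simp
    next
      case False
      have "clustered h \<K> \<alpha> \<beta>"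
        unfolding \<K>_def by (intro clustered_restrict Delta_imp_clustered Q(2))
      then have "\<bar>psi M act f h I - psiQ M act f h Q I\<bar>
          \<le> C * exp (- \<delta> r * \<beta>) * exp (\<sigma> s * \<alpha>) ^ card I * N s f ^ card I"
        unfolding psiQ_eq_prod_restrict[OF Q(1) _ \<open>I \<subseteq> {1..r}\<close>, simplified, folded \<K>_def]
        using I False \<alpha>\<beta> \<open>f \<in> A\<close> by (intro C[rule_format]) simp
      also have "\<dots> \<le> C * exp (- \<delta> r * \<beta>) * exp (\<sigma> s * \<alpha>) ^ r * N s f ^ card I"
        using \<open>C \<ge> 0\<close> I(2) \<alpha>\<beta> \<sigma>_nonneg[of s] N_nonneg[of s f] \<open>f \<in> A\<close> assms
        by (intro mult_left_mono mult_right_mono power_increasing) auto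
      also have "\<dots> = C * exp (- (\<beta> * \<delta> r - real r * \<alpha> * \<sigma> s)) * N s f ^ card I"
        by (simp add: exp_diff exp_minus exp_of_nat_mult[symmetric] field_simps)
      finally show ?thesis .
    qed
  qed (rule \<open>C \<ge> 0\<close>)
qed

lemma psi_psiQ_block_bounds:
  assumes "sk r + r < s"
  shows "\<exists>C\<ge>0. \<exists>C\<^sub>0\<ge>0. \<forall>\<alpha> \<beta> Q h f I. 0 \<le> \<alpha> \<and> \<alpha> < \<beta> \<and> partition_on {1..r} Q \<and> h \<in> Delta Q \<alpha> \<beta> \<and>
      f \<in> A \<and> I \<subseteq> {1..r} \<longrightarrow>
      \<bar>psi M act f h I\<bar> \<le> (C\<^sub>0 * N s f) ^ card I \<and> \<bar>psiQ M act f h Q I\<bar> \<le> (C\<^sub>0 * N s f) ^ card I \<and>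
      \<bar>psi M act f h I - psiQ M act f h Q I\<bar>
        \<le> C * exp (- (\<beta> * \<delta> r - real r * \<alpha> * \<sigma> s)) * (C\<^sub>0 * N s f) ^ card I"
proof -
  obtain C where "C \<ge> 0" and C: "\<forall>\<alpha> \<beta> Q (h::nat \<Rightarrow> 'h) f I. 0 \<le> \<alpha> \<and> \<alpha> < \<beta> \<and> partition_on {1..r} Q \<and>
      h \<in> Delta Q \<alpha> \<beta> \<and> f \<in> A \<and> I \<subseteq> {1..r} \<longrightarrow>
      \<bar>psi M act f h I - psiQ M act f h Q I\<bar> \<le> C * exp (- (\<beta> * \<delta> r - real r * \<alpha> * \<sigma> s)) * N s f ^ card I"
    using psi_psiQ_Delta_le[OF assms] by blast
  obtain C\<^sub>0 where "C\<^sub>0 \<ge> 1" and C\<^sub>0: "\<forall>f\<in>A. AE x in M. \<bar>f x\<bar> \<le> C\<^sub>0 * N s f"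
    using AE_abs_le_N[of s] assms by auto
  have "\<bar>psi M act f h I\<bar> \<le> (C\<^sub>0 * N s f) ^ card I \<and> \<bar>psiQ M act f h Q I\<bar> \<le> (C\<^sub>0 * N s f) ^ card I \<and>
      \<bar>psi M act f h I - psiQ M act f h Q I\<bar>
        \<le> C * exp (- (\<beta> * \<delta> r - real r * \<alpha> * \<sigma> s)) * (C\<^sub>0 * N s f) ^ card I"
    if H: "0 \<le> \<alpha>" "\<alpha> < \<beta>" "partition_on {1..r} Q" "h \<in> Delta Q \<alpha> \<beta>" "f \<in> A" "I \<subseteq> {1..r}"
    for \<alpha> \<beta> Q and h :: "nat \<Rightarrow> 'h" and f I
  proof (intro conjI)
    have N: "0 \<le> N s f" "N s f \<le> C\<^sub>0 * N s f"
      using N_nonneg[of s f] H(5) assms mult_right_mono[OF \<open>C\<^sub>0 \<ge> 1\<close>, of "N s f"] by simp_all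
    have f_le: "AE x in M. \<bar>f x\<bar> \<le> C\<^sub>0 * N s f"
      using C\<^sub>0 H(5) by blast
    show "\<bar>psi M act f h I\<bar> \<le> (C\<^sub>0 * N s f) ^ card I"
      using psi_abs_le[OF H(5) f_le] finite_subset[OF H(6)] by simp
    show "\<bar>psiQ M act f h Q I\<bar> \<le> (C\<^sub>0 * N s f) ^ card I"
      using psiQ_abs_le[OF H(5) f_le H(3) _ H(6)] by simp
    have "\<bar>psi M act f h I - psiQ M act f h Q I\<bar> \<le> C * exp (- (\<beta> * \<delta> r - real r * \<alpha> * \<sigma> s)) * N s f ^ card I"
      using C H by blast
    also have "\<dots> \<le> C * exp (- (\<beta> * \<delta> r - real r * \<alpha> * \<sigma> s)) * (C\<^sub>0 * N s f) ^ card I"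
      using \<open>C \<ge> 0\<close> N by (intro mult_left_mono power_mono) simp_all
    finally show "\<bar>psi M act f h I - psiQ M act f h Q I\<bar>
        \<le> C * exp (- (\<beta> * \<delta> r - real r * \<alpha> * \<sigma> s)) * (C\<^sub>0 * N s f) ^ card I" .
  qed
  with \<open>C \<ge> 0\<close> \<open>C\<^sub>0 \<ge> 1\<close> show ?thesis
    by (intro exI[of _ C] exI[of _ C\<^sub>0] conjI) auto
qed

end

theorem proposition7p2:
  fixes M :: "'x measure"
    and act :: "'h::{group_add,metric_space} \<Rightarrow> 'x \<Rightarrow> 'x"
    and A :: "('x \<Rightarrow> real) set"
    and N :: "nat \<Rightarrow> ('x \<Rightarrow> real) \<Rightarrow> real"
    and \<sigma> \<delta> :: "nat \<Rightarrow> real" and sk :: "nat \<Rightarrow> nat"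
    and r s :: nat
  assumes "lcsc_left_inv_metric_group TYPE('h)"
    and "prob_space M"
    and "mp_action M act"
    and "invariant_subalgebra M act A"
    and "seminorm_family M act A N \<sigma>"
    and "exp_mixing_all_orders M act A N \<delta> sk"
    and "parameter_conventions \<sigma> sk \<delta>"
    and "r \<ge> 3"
    and "s > sk r + r"
  shows "\<exists>C. \<forall>\<alpha> \<beta> Q h f P. 0 \<le> \<alpha> \<longrightarrow> \<alpha> < \<beta> \<longrightarrow> partition_on {1..r} Q \<longrightarrow>
           h \<in> Delta Q \<alpha> \<beta> \<longrightarrow> f \<in> A \<longrightarrow> P \<in> cyc_partitions r \<longrightarrow>
           \<bar>psi_tilde M act f h P - psiQ_tilde M act f h Q P\<bar>
             \<le> C * exp (- (\<beta> * \<delta> r - real r * \<alpha> * \<sigma> s)) * N s f ^ r"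
proof -
  interpret exp_mixing_action M act A N \<sigma> \<delta> sk
    by (rule exp_mixing_action.intro) (fact assms)+
  obtain C C\<^sub>0 where "C \<ge> 0" "C\<^sub>0 \<ge> 0" and blocks: "\<forall>\<alpha> \<beta> Q h f I. 0 \<le> \<alpha> \<and> \<alpha> < \<beta> \<and>
      partition_on {1..r} Q \<and> h \<in> Delta Q \<alpha> \<beta> \<and> f \<in> A \<and> I \<subseteq> {1..r} \<longrightarrow>
      \<bar>psi M act f h I\<bar> \<le> (C\<^sub>0 * N s f) ^ card I \<and> \<bar>psiQ M act f h Q I\<bar> \<le> (C\<^sub>0 * N s f) ^ card I \<and>
      \<bar>psi M act f h I - psiQ M act f h Q I\<bar>
        \<le> C * exp (- (\<beta> * \<delta> r - real r * \<alpha> * \<sigma> s)) * (C\<^sub>0 * N s f) ^ card I"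
    using psi_psiQ_block_bounds assms(9) by blast
  show ?thesis
  proof (intro exI[of _ "real r * C * C\<^sub>0 ^ r"] allI impI)
    fix \<alpha> \<beta> Q and h :: "nat \<Rightarrow> 'h" and f P
    assume H: "0 \<le> \<alpha>" "\<alpha> < \<beta>" "partition_on {1..r} Q" "h \<in> Delta Q \<alpha> \<beta>" "f \<in> A" "P \<in> cyc_partitions r"
    then have P: "partition_on {1..r} (set P)"
      by (simp add: cyc_partitions_def)
    have "\<bar>psi_tilde M act f h P - psiQ_tilde M act f h Q P\<bar>
        \<le> card {1..r} * (C * exp (- (\<beta> * \<delta> r - real r * \<alpha> * \<sigma> s))) * (C\<^sub>0 * N s f) ^ card {1..r}"
      unfolding psi_tilde_def psiQ_tilde_def
      using blocks H partition_on_block(1)[OF P] \<open>C \<ge> 0\<close> \<open>C\<^sub>0 \<ge> 0\<close> N_nonneg[of s f] assms(9)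
      by (intro abs_prod_partition_diff_le[OF _ P]) (simp_all add: mult.assoc)
    then show "\<bar>psi_tilde M act f h P - psiQ_tilde M act f h Q P\<bar>
        \<le> real r * C * C\<^sub>0 ^ r * exp (- (\<beta> * \<delta> r - real r * \<alpha> * \<sigma> s)) * N s f ^ r"
      by (simp add: power_mult_distrib mult_ac)
  qed
qed

end
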